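(* Let $D$ be a Newton diagram in $2$ variables whose support $K$ contains all $(a,b)\in\mathbb N_0^2$ with $a+b<k$ and at least one point $(a,b)$ with $a+b=k$. Then there exists a Newton diagram $\tilde D$ with support $\tilde K$ such that $K\subset\tilde K$, $\tilde D|_K=D|_K$, $\tilde K$ contains all $(a,b)\in\mathbb N_0^2$ with $a+b=k$, every point of $\tilde K\setminus K$ satisfies $a+b=k$, and $SC(\tilde D)\le SC(D)$.
   Context: For $m\in\mathbb Z^n$ write $|m|=m_1+\dots+m_n$; $e_1,\dots,e_n$ is the standard basis. A Newton diagram in $n$ variables is a function $D\colon\mathbb Z^n\to\{0,P,N\}$ ($P,N$ formal symbols) whose support $K=D^{-1}(\{P,N\})$ is a finite nonempty subset of $\mathbb N_0^n$. For $a\in\mathbb Z^n$ let $E(a)=\{a,a-e_1,\dots,a-e_n\}$; $E(a)$ is a node of $D$ if the image $D(E(a))$ equals $\{P\}$, $\{N\}$, $\{0,P\}$ or $\{0,N\}$. For $n=2$: a node $E(a)$ is an interior node if no point of $E(a)$ has $D$-value $0$, an edge node if exactly one does, a vertex node if exactly two do; a vertex node is a bottom node if its two $0$-points are $a-e_1$ and $a-e_2$. The weighted surface count is $SC(D)=(\#\text{interior nodes})+\tfrac12\big((\#\text{edge nodes})+(\#\text{vertex nodes})-(\#\text{bottom nodes})\big)$. *)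

theory Defs
  imports Complex_Main
begin

datatype dval = Z | P | N

type_synonym diagram = "int \<times> int \<Rightarrow> dval"

definition supp :: "diagram \<Rightarrow> (int \<times> int) set" where
  "supp D = {m. D m \<noteq> Z}"

definition newton_diagram :: "diagram \<Rightarrow> bool" where
  "newton_diagram D \<longleftrightarrow> finite (supp D) \<and> supp D \<noteq> {} \<and>
     (\<forall>(x,y)\<in>supp D. x \<ge> 0 \<and> y \<ge> 0)"

definition Eset :: "int \<times> int \<Rightarrow> (int \<times> int) set" where
  "Eset a = {a, (fst a - 1, snd a), (fst a, snd a - 1)}"

definition is_node :: "diagram \<Rightarrow> int \<times> int \<Rightarrow> bool" where
  "is_node D a \<longleftrightarrow> D ` Eset a \<in> {{P}, {N}, {Z, P}, {Z, N}}"

definition zero_pts :: "diagram \<Rightarrow> int \<times> int \<Rightarrow> (int \<times> int) set" where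
  "zero_pts D a = {m \<in> Eset a. D m = Z}"

definition interior_nodes :: "diagram \<Rightarrow> (int \<times> int) set" where
  "interior_nodes D = {a. is_node D a \<and> card (zero_pts D a) = 0}"

definition edge_nodes :: "diagram \<Rightarrow> (int \<times> int) set" where
  "edge_nodes D = {a. is_node D a \<and> card (zero_pts D a) = 1}"

definition vertex_nodes :: "diagram \<Rightarrow> (int \<times> int) set" where
  "vertex_nodes D = {a. is_node D a \<and> card (zero_pts D a) = 2}"

definition bottom_nodes :: "diagram \<Rightarrow> (int \<times> int) set" where
  "bottom_nodes D = {a. a \<in> vertex_nodes D \<and>
      zero_pts D a = {(fst a - 1, snd a), (fst a, snd a - 1)}}"

definition SC :: "diagram \<Rightarrow> real" where
  "SC D = real (card (interior_nodes D)) +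
     (real (card (edge_nodes D)) + real (card (vertex_nodes D))
      - real (card (bottom_nodes D))) / 2"

end

theory Submission
  imports Defs
begin

(*
  Twice the surface count is a sum of local weights: a point a contributes 2 if it is an
  interior node, 1 if it is an edge node or a non-bottom vertex node, and 0 otherwise; the weight
  only depends on the values of D at a, a - e1 and a - e2.  We fill every empty point (a, k - a),
  0 <= a <= k, of the k-th diagonal with a sign s a in {P, N}.  Only the local weights on the
  diagonals k and k + 1 change, so 2 SC changes by a sum of per-column contributions.
*)

definition node_pattern :: "dval \<Rightarrow> dval \<Rightarrow> dval \<Rightarrow> bool" where
  "node_pattern x y z \<longleftrightarrow>
     (x \<noteq> N \<and> y \<noteq> N \<and> z \<noteq> N \<and> (x = P \<or> y = P \<or> z = P)) \<or>
     (x \<noteq> P \<and> y \<noteq> P \<and> z \<noteq> P \<and> (x = N \<or> y = N \<or> z = N))"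

definition zero_count :: "dval \<Rightarrow> int" where
  "zero_count v = (if v = Z then 1 else 0)"

(* Twice the contribution of a point to SC, as a function of its value triple. *)
definition node_weight :: "dval \<Rightarrow> dval \<Rightarrow> dval \<Rightarrow> int" where
  "node_weight x y z =
     (if \<not> node_pattern x y z then 0
      else if zero_count x + zero_count y + zero_count z = 0 then 2
      else if zero_count x + zero_count y + zero_count z = 1 then 1
      else if x \<noteq> Z then 0 else 1)"

lemma node_weight_swap: "node_weight x y z = node_weight x z y"
  unfolding node_weight_def node_pattern_def by (auto simp: algebra_simps)

lemma weight_fill_lower:
  "L1 \<noteq> Z \<or> L2 \<noteq> Z \<Longrightarrow>
   node_weight P L1 L2 + node_weight N L1 L2 \<le> 2 * node_weight Z L1 L2 - of_bool (L1 = Z \<or> L2 = Z)"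
  by (cases L1; cases L2) (auto simp: node_weight_def node_pattern_def zero_count_def)

lemma weight_fill_beside_filled:
  "r \<noteq> Z \<Longrightarrow> node_weight U r P + node_weight U r N \<le> 2 * node_weight U r Z"
  by (cases r; cases U) (auto simp: node_weight_def node_pattern_def zero_count_def)

lemma weight_fill_beside_empty:
  "node_weight U Z P + node_weight U Z N \<le> 2 * node_weight U Z Z + 2"
  by (cases U) (auto simp: node_weight_def node_pattern_def zero_count_def)

(* Two lower neighbours of opposite signs do not form a node with the upper point. *)
lemma weight_opposite_signs: "node_weight U P N = node_weight U Z Z"
  by (cases U) (auto simp: node_weight_def node_pattern_def zero_count_def)

definition local_weight :: "diagram \<Rightarrow> int \<times> int \<Rightarrow> int" where
  "local_weight D a = node_weight (D a) (D (fst a - 1, snd a)) (D (fst a, snd a - 1))"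

lemma is_node_iff_pattern:
  "is_node D a \<longleftrightarrow> node_pattern (D a) (D (fst a - 1, snd a)) (D (fst a, snd a - 1))"
  unfolding is_node_def Eset_def node_pattern_def
  by (cases "D a"; cases "D (fst a - 1, snd a)"; cases "D (fst a, snd a - 1)")
     (auto simp: insert_commute)

lemma zero_pts_explicit:
  "zero_pts D (x, y) = (if D (x, y) = Z then {(x, y)} else {}) \<union>
     (if D (x - 1, y) = Z then {(x - 1, y)} else {}) \<union>
     (if D (x, y - 1) = Z then {(x, y - 1)} else {})"
  unfolding zero_pts_def Eset_def by auto

lemma card_zero_pts:
  "int (card (zero_pts D a)) =
     zero_count (D a) + zero_count (D (fst a - 1, snd a)) + zero_count (D (fst a, snd a - 1))"
proof -
  obtain x y where a: "a = (x, y)" by (cases a)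
  show ?thesis unfolding a zero_pts_explicit zero_count_def
    by (cases "D (x, y) = Z"; cases "D (x - 1, y) = Z"; cases "D (x, y - 1) = Z") auto
qed

lemma bottom_nodes_iff:
  "a \<in> bottom_nodes D \<longleftrightarrow>
     a \<in> vertex_nodes D \<and> D a \<noteq> Z \<and> D (fst a - 1, snd a) = Z \<and> D (fst a, snd a - 1) = Z"
proof -
  obtain x y where a: "a = (x, y)" by (cases a)
  have "zero_pts D (x, y) = {(x - 1, y), (x, y - 1)} \<longleftrightarrow>
          D (x, y) \<noteq> Z \<and> D (x - 1, y) = Z \<and> D (x, y - 1) = Z"
  proof
    assume "zero_pts D (x, y) = {(x - 1, y), (x, y - 1)}"
    then have "(x - 1, y) \<in> zero_pts D (x, y)" "(x, y - 1) \<in> zero_pts D (x, y)"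
      "(x, y) \<notin> zero_pts D (x, y)" by auto
    then show "D (x, y) \<noteq> Z \<and> D (x - 1, y) = Z \<and> D (x, y - 1) = Z"
      unfolding zero_pts_def Eset_def by auto
  qed (auto simp: zero_pts_explicit)
  then show ?thesis unfolding a bottom_nodes_def by simp
qed

lemma local_weight_indicators:
  "local_weight D a = 2 * of_bool (a \<in> interior_nodes D) + of_bool (a \<in> edge_nodes D)
     + of_bool (a \<in> vertex_nodes D) - of_bool (a \<in> bottom_nodes D)"
  using card_zero_pts[of D a]
  unfolding bottom_nodes_iff interior_nodes_def edge_nodes_def vertex_nodes_def
    local_weight_def is_node_iff_pattern
  by (cases "D a"; cases "D (fst a - 1, snd a)"; cases "D (fst a, snd a - 1)")
     (auto simp: node_weight_def node_pattern_def zero_count_def)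

definition shift_hull :: "(int \<times> int) set \<Rightarrow> (int \<times> int) set" where
  "shift_hull S = S \<union> (\<lambda>(x, y). (x + 1, y)) ` S \<union> (\<lambda>(x, y). (x, y + 1)) ` S"

lemma finite_shift_hull: "finite S \<Longrightarrow> finite (shift_hull S)"
  unfolding shift_hull_def by auto

lemma shift_hull_mono: "S \<subseteq> T \<Longrightarrow> shift_hull S \<subseteq> shift_hull T"
  unfolding shift_hull_def by auto

lemma nodes_in_shift_hull: "{a. is_node D a} \<subseteq> shift_hull (supp D)"
proof
  fix a assume "a \<in> {a. is_node D a}"
  then have "D a \<noteq> Z \<or> D (fst a - 1, snd a) \<noteq> Z \<or> D (fst a, snd a - 1) \<noteq> Z"
    by (auto simp: is_node_iff_pattern node_pattern_def)
  then show "a \<in> shift_hull (supp D)"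
    unfolding shift_hull_def supp_def by (cases a) (force simp: image_iff)
qed

lemma card_as_indicator_sum:
  "finite F \<Longrightarrow> A \<subseteq> F \<Longrightarrow> real (card A) = (\<Sum>a\<in>F. of_bool (a \<in> A))"
  by (simp add: of_bool_def sum.If_cases Int_absorb1)

lemma double_SC_as_sum:
  assumes "finite F" and "{a. is_node D a} \<subseteq> F"
  shows "2 * SC D = (\<Sum>a\<in>F. real_of_int (local_weight D a))"
proof -
  have "interior_nodes D \<subseteq> F" "edge_nodes D \<subseteq> F" "vertex_nodes D \<subseteq> F" "bottom_nodes D \<subseteq> F"
    using assms(2)
    unfolding interior_nodes_def edge_nodes_def vertex_nodes_def bottom_nodes_def by auto
  then show ?thesis
    unfolding SC_def local_weight_indicators
    by (simp add: card_as_indicator_sum[OF assms(1)] sum.distrib sum_subtractf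
        flip: sum_distrib_left)
qed

definition diagonal :: "int \<Rightarrow> (int \<times> int) set" where
  "diagonal k = (\<lambda>a. (a, k - a)) ` {0..k}"

lemma mem_diagonal [simp]: "(x, y) \<in> diagonal k \<longleftrightarrow> x + y = k \<and> 0 \<le> x \<and> 0 \<le> y"
  unfolding diagonal_def by (auto simp: image_iff)

lemma finite_diagonal: "finite (diagonal k)"
  unfolding diagonal_def by simp

definition fill_diagonal :: "diagram \<Rightarrow> int \<Rightarrow> (int \<Rightarrow> dval) \<Rightarrow> diagram" where
  "fill_diagonal D k s m = (if m \<in> diagonal k \<and> D m = Z then s (fst m) else D m)"

lemma fill_keeps: "D m \<noteq> Z \<Longrightarrow> fill_diagonal D k s m = D m"
  unfolding fill_diagonal_def by simp

lemma fill_changes_only_diagonal: "fill_diagonal D k s m \<noteq> D m \<Longrightarrow> m \<in> diagonal k"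
  unfolding fill_diagonal_def by (auto split: if_splits)

lemma supp_fill: "supp (fill_diagonal D k s) \<subseteq> supp D \<union> diagonal k"
proof
  fix m assume "m \<in> supp (fill_diagonal D k s)"
  then show "m \<in> supp D \<union> diagonal k"
    using fill_changes_only_diagonal[of D k s m] unfolding supp_def by auto
qed

lemma local_weight_fill_outside:
  assumes "b \<notin> diagonal k \<union> diagonal (k + 1)"
  shows "local_weight (fill_diagonal D k s) b = local_weight D b"
proof -
  obtain x y where b: "b = (x, y)" by (cases b)
  have "(x, y) \<notin> diagonal k" "(x - 1, y) \<notin> diagonal k" "(x, y - 1) \<notin> diagonal k"
    using assms unfolding b by auto
  then have "fill_diagonal D k s (x, y) = D (x, y)" "fill_diagonal D k s (x - 1, y) = D (x - 1, y)"
    "fill_diagonal D k s (x, y - 1) = D (x, y - 1)"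
    by (metis fill_changes_only_diagonal)+
  then show ?thesis unfolding b local_weight_def by simp
qed

definition diag_change :: "diagram \<Rightarrow> int \<Rightarrow> (int \<Rightarrow> dval) \<Rightarrow> int \<Rightarrow> int" where
  "diag_change D k s a = local_weight (fill_diagonal D k s) (a, k - a) - local_weight D (a, k - a)"

definition upper_change :: "diagram \<Rightarrow> int \<Rightarrow> (int \<Rightarrow> dval) \<Rightarrow> int \<Rightarrow> int" where
  "upper_change D k s a =
     local_weight (fill_diagonal D k s) (a, k + 1 - a) - local_weight D (a, k + 1 - a)"

definition partial_change :: "diagram \<Rightarrow> int \<Rightarrow> (int \<Rightarrow> dval) \<Rightarrow> int \<Rightarrow> int" where
  "partial_change D k s n = (\<Sum>a\<in>{0..n}. diag_change D k s a + upper_change D k s a)"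

lemma partial_change_step:
  "0 \<le> n \<Longrightarrow> partial_change D k s (n + 1) =
     partial_change D k s n + diag_change D k s (n + 1) + upper_change D k s (n + 1)"
proof -
  assume "0 \<le> n"
  then have "{0..n + 1} = insert (n + 1) {0..n}" by auto
  then show ?thesis unfolding partial_change_def by simp
qed

lemma partial_change_0: "partial_change D k s 0 = diag_change D k s 0 + upper_change D k s 0"
  by (simp add: partial_change_def)

lemma partial_change_upd:
  "n < m \<Longrightarrow> partial_change D k (s(m := \<sigma>)) n = partial_change D k s n"
  unfolding partial_change_def diag_change_def upper_change_def local_weight_def fill_diagonal_def
  by (intro sum.cong) auto

lemma SC_fill_change:
  assumes "finite (supp D)" and "0 \<le> k"
  shows "2 * SC (fill_diagonal D k s) - 2 * SC D =
           real_of_int (partial_change D k s k + upper_change D k s (k + 1))"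
proof -
  define F where "F = shift_hull (supp D \<union> diagonal k) \<union> (diagonal k \<union> diagonal (k + 1))"
  have fin: "finite F"
    unfolding F_def using assms(1) by (simp add: finite_shift_hull finite_diagonal)
  have nodes_D: "{a. is_node D a} \<subseteq> F"
    using nodes_in_shift_hull[of D] shift_hull_mono[of "supp D" "supp D \<union> diagonal k"]
    unfolding F_def by blast
  have nodes_fill: "{a. is_node (fill_diagonal D k s) a} \<subseteq> F"
    using nodes_in_shift_hull[of "fill_diagonal D k s"] shift_hull_mono[OF supp_fill[of D k s]]
    unfolding F_def by blast
  let ?g = "\<lambda>a. real_of_int (local_weight (fill_diagonal D k s) a - local_weight D a)"
  have "2 * SC (fill_diagonal D k s) - 2 * SC D = (\<Sum>a\<in>F. ?g a)"
    unfolding double_SC_as_sum[OF fin nodes_D] double_SC_as_sum[OF fin nodes_fill]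
    by (simp add: sum_subtractf)
  also have "\<dots> = (\<Sum>a\<in>diagonal k \<union> diagonal (k + 1). ?g a)"
    by (rule sum.mono_neutral_right[OF fin]) (auto simp: F_def local_weight_fill_outside)
  also have "\<dots> = (\<Sum>a\<in>diagonal k. ?g a) + (\<Sum>a\<in>diagonal (k + 1). ?g a)"
    by (rule sum.union_disjoint) (auto simp: finite_diagonal diagonal_def)
  also have "(\<Sum>a\<in>diagonal k. ?g a) = (\<Sum>a\<in>{0..k}. real_of_int (diag_change D k s a))"
    unfolding diagonal_def diag_change_def by (subst sum.reindex) (auto simp: inj_on_def)
  also have "(\<Sum>a\<in>diagonal (k + 1). ?g a) = (\<Sum>a\<in>{0..k + 1}. real_of_int (upper_change D k s a))"
    unfolding diagonal_def upper_change_def by (subst sum.reindex) (auto simp: inj_on_def)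
  also have "{0..k + 1} = insert (k + 1) {0..k}" using assms(2) by auto
  finally show ?thesis unfolding partial_change_def by (simp add: sum.distrib)
qed

lemma fill_on_diagonal:
  "0 \<le> a \<Longrightarrow> a \<le> k \<Longrightarrow>
     fill_diagonal D k s (a, k - a) = (if D (a, k - a) = Z then s a else D (a, k - a))"
  unfolding fill_diagonal_def by simp

lemma diag_change_eq:
  "diag_change D k s a =
     node_weight (fill_diagonal D k s (a, k - a)) (D (a - 1, k - a)) (D (a, k - a - 1))
     - node_weight (D (a, k - a)) (D (a - 1, k - a)) (D (a, k - a - 1))"
  unfolding diag_change_def local_weight_def by (simp add: fill_diagonal_def)

lemma upper_change_eq:
  "upper_change D k s a =
     node_weight (D (a, k + 1 - a)) (fill_diagonal D k s (a - 1, k - (a - 1)))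
       (fill_diagonal D k s (a, k - a))
     - node_weight (D (a, k + 1 - a)) (D (a - 1, k - (a - 1))) (D (a, k - a))"
  unfolding upper_change_def local_weight_def by (simp add: fill_diagonal_def algebra_simps)

definition sign_choice :: "(int \<Rightarrow> dval) \<Rightarrow> bool" where
  "sign_choice s \<longleftrightarrow> (\<forall>a. s a \<noteq> Z)"

(* The invariant of the averaging argument.  A filled column n admits one sign choice with
   nonpositive partial change; an empty column admits a P/N pair at n whose partial changes sum
   to at most 1 if no earlier column is filled (0 otherwise), minus 1 if n is the last column. *)
definition good_choice :: "diagram \<Rightarrow> int \<Rightarrow> int \<Rightarrow> bool" where
  "good_choice D k n \<longleftrightarrow> (\<exists>s. sign_choice s \<and> partial_change D k s n \<le> 0)"

definition good_pair :: "diagram \<Rightarrow> int \<Rightarrow> int \<Rightarrow> int \<Rightarrow> bool" where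
  "good_pair D k n c \<longleftrightarrow> (\<exists>s1 s2. sign_choice s1 \<and> sign_choice s2 \<and> s1 n = P \<and> s2 n = N \<and>
     partial_change D k s1 n + partial_change D k s2 n \<le> c)"

definition gap_allowance :: "diagram \<Rightarrow> int \<Rightarrow> int \<Rightarrow> int" where
  "gap_allowance D k n =
     of_bool (\<forall>m. 0 \<le> m \<and> m < n \<longrightarrow> D (m, k - m) = Z) - of_bool (n = k)"

definition prefix_invariant :: "diagram \<Rightarrow> int \<Rightarrow> int \<Rightarrow> bool" where
  "prefix_invariant D k n \<longleftrightarrow>
     (if D (n, k - n) = Z then good_pair D k n (gap_allowance D k n) else good_choice D k n)"

context
  fixes D :: diagram and k :: int
  assumes newton: "newton_diagram D"
    and below_full: "\<forall>a b. a \<ge> 0 \<and> b \<ge> 0 \<and> a + b < k \<longrightarrow> (a, b) \<in> supp D"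
    and k_pos: "k \<ge> 1"
begin

lemma outside_quadrant_zero: "x < 0 \<or> y < 0 \<Longrightarrow> D (x, y) = Z"
  using newton unfolding newton_diagram_def supp_def by fastforce

lemma below_diagonal_nonzero: "0 \<le> x \<Longrightarrow> 0 \<le> y \<Longrightarrow> x + y < k \<Longrightarrow> D (x, y) \<noteq> Z"
  using below_full unfolding supp_def by auto

lemma diag_change_pair:
  assumes "0 \<le> a" "a \<le> k" "D (a, k - a) = Z" "s1 a = P" "s2 a = N"
  shows "diag_change D k s1 a + diag_change D k s2 a \<le> - of_bool (a = 0 \<or> a = k)"
proof -
  have left: "D (a - 1, k - a) = Z \<longleftrightarrow> a = 0"
    using outside_quadrant_zero below_diagonal_nonzero assms(1,2) by (cases "a = 0") auto
  have down: "D (a, k - a - 1) = Z \<longleftrightarrow> a = k"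
    using outside_quadrant_zero below_diagonal_nonzero assms(1,2) by (cases "a = k") auto
  have "D (a - 1, k - a) \<noteq> Z \<or> D (a, k - a - 1) \<noteq> Z"
    using left down k_pos by auto
  from weight_fill_lower[OF this] show ?thesis
    using left down assms by (simp add: diag_change_eq fill_on_diagonal)
qed

lemma diag_change_filled: "D (a, k - a) \<noteq> Z \<Longrightarrow> diag_change D k s a = 0"
  unfolding diag_change_eq fill_diagonal_def by simp

lemma step_filled_filled:
  assumes "0 \<le> n" "n + 1 \<le> k" "D (n, k - n) \<noteq> Z" "D (n + 1, k - (n + 1)) \<noteq> Z"
  shows "partial_change D k s (n + 1) = partial_change D k s n"
  using assms
  by (simp add: partial_change_step diag_change_filled upper_change_eq fill_diagonal_def)

lemma step_gap_filled:
  assumes "0 \<le> n" "n + 1 \<le> k" "D (n, k - n) = Z" "D (n + 1, k - (n + 1)) \<noteq> Z"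
    and "s1 n = P" "s2 n = N"
  shows "partial_change D k s1 (n + 1) + partial_change D k s2 (n + 1)
           \<le> partial_change D k s1 n + partial_change D k s2 n"
proof -
  have "upper_change D k s1 (n + 1) + upper_change D k s2 (n + 1) \<le> 0"
    using assms weight_fill_beside_filled[of "D (n + 1, k - (n + 1))" "D (n + 1, k + 1 - (n + 1))"]
    by (simp add: upper_change_eq fill_diagonal_def node_weight_swap)
  then show ?thesis
    using assms by (simp add: partial_change_step diag_change_filled)
qed

lemma step_filled_gap:
  assumes "0 \<le> n" "n + 1 \<le> k" "D (n, k - n) \<noteq> Z" "D (n + 1, k - (n + 1)) = Z"
  shows "partial_change D k (s(n + 1 := P)) (n + 1) + partial_change D k (s(n + 1 := N)) (n + 1)
           \<le> 2 * partial_change D k s n - of_bool (n + 1 = k)"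
proof -
  have "diag_change D k (s(n + 1 := P)) (n + 1) + diag_change D k (s(n + 1 := N)) (n + 1)
          \<le> - of_bool (n + 1 = k)"
    using assms diag_change_pair[of "n + 1"] by simp
  moreover have
    "upper_change D k (s(n + 1 := P)) (n + 1) + upper_change D k (s(n + 1 := N)) (n + 1) \<le> 0"
    using assms weight_fill_beside_filled[of "D (n, k - n)" "D (n + 1, k + 1 - (n + 1))"]
    by (simp add: upper_change_eq fill_diagonal_def)
  ultimately show ?thesis
    using assms by (simp add: partial_change_step partial_change_upd)
qed

lemma step_gap_gap:
  assumes "0 \<le> n" "n + 1 \<le> k" "D (n, k - n) = Z" "D (n + 1, k - (n + 1)) = Z"
    and "s1 n = P" "s2 n = N"
  shows "partial_change D k (s2(n + 1 := P)) (n + 1) + partial_change D k (s1(n + 1 := N)) (n + 1)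
           \<le> partial_change D k s1 n + partial_change D k s2 n - of_bool (n + 1 = k)"
proof -
  have "diag_change D k (s2(n + 1 := P)) (n + 1) + diag_change D k (s1(n + 1 := N)) (n + 1)
          \<le> - of_bool (n + 1 = k)"
    using assms diag_change_pair[of "n + 1"] by simp
  moreover have "upper_change D k (s2(n + 1 := P)) (n + 1) = 0"
    "upper_change D k (s1(n + 1 := N)) (n + 1) = 0"
    using assms weight_opposite_signs[of "D (n + 1, k + 1 - (n + 1))"]
    by (simp_all add: upper_change_eq fill_diagonal_def node_weight_swap)
  ultimately show ?thesis
    using assms by (simp add: partial_change_step partial_change_upd)
qed

(* The first column, whose left neighbour (-1, k + 1) is empty. *)
lemma first_column_filled: "D (0, k) \<noteq> Z \<Longrightarrow> partial_change D k s 0 = 0"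
  by (simp add: partial_change_0 diag_change_filled upper_change_eq fill_diagonal_def)

lemma first_column_gap:
  assumes "D (0, k) = Z" "s1 0 = P" "s2 0 = N"
  shows "partial_change D k s1 0 + partial_change D k s2 0 \<le> 1"
proof -
  have "diag_change D k s1 0 + diag_change D k s2 0 \<le> -1"
    using assms k_pos diag_change_pair[of 0 s1 s2] by simp
  moreover have "upper_change D k s1 0 + upper_change D k s2 0 \<le> 2"
    using assms k_pos outside_quadrant_zero[of "-1" "k + 1"]
      weight_fill_beside_empty[of "D (0, k + 1)"]
    by (simp add: upper_change_eq fill_diagonal_def)
  ultimately show ?thesis by (simp add: partial_change_0)
qed

(* The point (k + 1, 0) above the last column, whose lower neighbour (k + 1, -1) is empty. *)
lemma last_column_filled: "D (k, 0) \<noteq> Z \<Longrightarrow> upper_change D k s (k + 1) = 0"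
  by (simp add: upper_change_eq fill_diagonal_def)

lemma last_column_gap:
  assumes "D (k, 0) = Z" "s1 k = P" "s2 k = N"
  shows "upper_change D k s1 (k + 1) + upper_change D k s2 (k + 1) \<le> 2"
  using assms k_pos outside_quadrant_zero[of "k + 1" "-1"]
    weight_fill_beside_empty[of "D (k + 1, 0)"]
  by (simp add: upper_change_eq fill_diagonal_def node_weight_swap)

lemma invariant_base: "prefix_invariant D k 0"
proof (cases "D (0, k) = Z")
  case True
  have "gap_allowance D k 0 = 1" using k_pos by (auto simp: gap_allowance_def)
  then have "good_pair D k 0 (gap_allowance D k 0)"
    using first_column_gap[OF True, of "\<lambda>_. P" "\<lambda>_. N"] unfolding good_pair_def sign_choice_def
    by (intro exI[of _ "\<lambda>_. P"] exI[of _ "\<lambda>_. N"]) simp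
  then show ?thesis using True by (simp add: prefix_invariant_def)
next
  case False
  then have "good_choice D k 0"
    using first_column_filled unfolding good_choice_def sign_choice_def
    by (intro exI[of _ "\<lambda>_. P"]) simp
  then show ?thesis using False by (simp add: prefix_invariant_def)
qed

lemma invariant_step_after_filled:
  assumes "0 \<le> n" "n + 1 \<le> k" "D (n, k - n) \<noteq> Z" "good_choice D k n"
  shows "prefix_invariant D k (n + 1)"
proof -
  obtain s where s: "sign_choice s" "partial_change D k s n \<le> 0"
    using assms(4) unfolding good_choice_def by blast
  show ?thesis
  proof (cases "D (n + 1, k - (n + 1)) = Z")
    case True
    have "gap_allowance D k (n + 1) = - of_bool (n + 1 = k)"
      using assms(1,3) by (auto simp: gap_allowance_def)
    then have "good_pair D k (n + 1) (gap_allowance D k (n + 1))"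
      using s step_filled_gap[OF assms(1-3) True, of s] unfolding good_pair_def sign_choice_def
      by (intro exI[of _ "s(n + 1 := P)"] exI[of _ "s(n + 1 := N)"]) auto
    then show ?thesis using True by (simp add: prefix_invariant_def)
  next
    case False
    then have "good_choice D k (n + 1)"
      using s step_filled_filled[OF assms(1-3) False, of s] unfolding good_choice_def by auto
    then show ?thesis using False by (simp add: prefix_invariant_def)
  qed
qed

lemma invariant_step_after_gap:
  assumes "0 \<le> n" "n + 1 \<le> k" "D (n, k - n) = Z" "good_pair D k n (gap_allowance D k n)"
  shows "prefix_invariant D k (n + 1)"
proof -
  obtain s1 s2 where s: "sign_choice s1" "sign_choice s2" "s1 n = P" "s2 n = N"
    "partial_change D k s1 n + partial_change D k s2 n \<le> gap_allowance D k n"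
    using assms(4) unfolding good_pair_def by blast
  show ?thesis
  proof (cases "D (n + 1, k - (n + 1)) = Z")
    case True
    have "(\<forall>m. 0 \<le> m \<and> m < n + 1 \<longrightarrow> D (m, k - m) = Z) \<longleftrightarrow>
          (\<forall>m. 0 \<le> m \<and> m < n \<longrightarrow> D (m, k - m) = Z)"
      using assms(3) by (metis zless_add1_eq)
    then have "gap_allowance D k (n + 1) = gap_allowance D k n - of_bool (n + 1 = k)"
      using assms(2) by (simp add: gap_allowance_def)
    then have "good_pair D k (n + 1) (gap_allowance D k (n + 1))"
      using s step_gap_gap[of n s1 s2, OF assms(1-3) True s(3,4)]
      unfolding good_pair_def sign_choice_def
      by (intro exI[of _ "s2(n + 1 := P)"] exI[of _ "s1(n + 1 := N)"]) auto
    then show ?thesis using True by (simp add: prefix_invariant_def)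
  next
    case False
    have "gap_allowance D k n \<le> 1" by (simp add: gap_allowance_def)
    then have "partial_change D k s1 (n + 1) \<le> 0 \<or> partial_change D k s2 (n + 1) \<le> 0"
      using s(5) step_gap_filled[of n s1 s2, OF assms(1-3) False s(3,4)] by linarith
    then have "good_choice D k (n + 1)" using s(1,2) unfolding good_choice_def by blast
    then show ?thesis using False by (simp add: prefix_invariant_def)
  qed
qed

lemma invariant_upto: "0 \<le> n \<Longrightarrow> n \<le> k \<Longrightarrow> prefix_invariant D k n"
proof (induction n rule: int_ge_induct[consumes 1, case_names base step])
  case base
  show ?case by (rule invariant_base)
next
  case (step n)
  then have "prefix_invariant D k n" by simp
  then show ?case
    using step invariant_step_after_filled invariant_step_after_gap
    unfolding prefix_invariant_def[of D k n] by (simp split: if_splits)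
qed

lemma good_total_choice:
  assumes "\<exists>a. 0 \<le> a \<and> a \<le> k \<and> D (a, k - a) \<noteq> Z"
  shows "\<exists>s. sign_choice s \<and> partial_change D k s k + upper_change D k s (k + 1) \<le> 0"
proof (cases "D (k, 0) = Z")
  case True
  then have "good_pair D k k (gap_allowance D k k)"
    using invariant_upto[of k] k_pos by (simp add: prefix_invariant_def)
  then obtain s1 s2 where s: "sign_choice s1" "sign_choice s2" "s1 k = P" "s2 k = N"
    "partial_change D k s1 k + partial_change D k s2 k \<le> gap_allowance D k k"
    unfolding good_pair_def by blast
  have "gap_allowance D k k = -1"
    using assms True by (auto simp: gap_allowance_def order.order_iff_strict)
  then have "partial_change D k s1 k + upper_change D k s1 (k + 1) \<le> 0 \<or>
             partial_change D k s2 k + upper_change D k s2 (k + 1) \<le> 0"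
    using s(5) last_column_gap[of s1 s2, OF True s(3,4)] by linarith
  then show ?thesis using s(1,2) by blast
next
  case False
  then have "good_choice D k k"
    using invariant_upto[of k] k_pos by (simp add: prefix_invariant_def)
  then show ?thesis
    using last_column_filled[OF False] unfolding good_choice_def by auto
qed

end

lemma supp_subset_fill: "supp D \<subseteq> supp (fill_diagonal D k s)"
  unfolding supp_def using fill_keeps by fastforce

lemma diagonal_subset_supp_fill: "sign_choice s \<Longrightarrow> diagonal k \<subseteq> supp (fill_diagonal D k s)"
  unfolding supp_def sign_choice_def fill_diagonal_def by auto

lemma newton_fill:
  assumes "newton_diagram D"
  shows "newton_diagram (fill_diagonal D k s)"
proof -
  have "finite (supp D)" "supp D \<noteq> {}" "\<forall>(x, y)\<in>supp D. 0 \<le> x \<and> 0 \<le> y"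
    using assms unfolding newton_diagram_def by auto
  then show ?thesis
    using supp_fill[of D k s] supp_subset_fill[of D k s] finite_diagonal[of k]
    unfolding newton_diagram_def by (auto intro: finite_subset)
qed

theorem mainTheorem10:
  fixes D :: diagram and k :: int
  assumes "newton_diagram D"
    and "\<forall>a b. a \<ge> 0 \<and> b \<ge> 0 \<and> a + b < k \<longrightarrow> (a, b) \<in> supp D"
    and "\<exists>a b. a \<ge> 0 \<and> b \<ge> 0 \<and> a + b = k \<and> (a, b) \<in> supp D"
  shows "\<exists>D'. newton_diagram D' \<and> supp D \<subseteq> supp D' \<and>
           (\<forall>m\<in>supp D. D' m = D m) \<and>
           (\<forall>a b. a \<ge> 0 \<and> b \<ge> 0 \<and> a + b = k \<longrightarrow> (a, b) \<in> supp D') \<and>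
           (\<forall>m\<in>supp D' - supp D. fst m + snd m = k) \<and>
           SC D' \<le> SC D"
proof -
  obtain a0 where a0: "0 \<le> a0" "a0 \<le> k" "D (a0, k - a0) \<noteq> Z"
    using assms(3) unfolding supp_def by force
  show ?thesis
  proof (cases "k = 0")
    case True
    have "(a, b) \<in> supp D" if "0 \<le> a" "0 \<le> b" "a + b = k" for a b :: int
    proof -
      have "a = 0" "b = 0" using that True by auto
      then show ?thesis using a0 True by (simp add: supp_def)
    qed
    then show ?thesis using assms(1) by (intro exI[of _ D]) auto
  next
    case False
    then have "1 \<le> k" using a0 by simp
    then obtain s where s: "sign_choice s"
      "partial_change D k s k + upper_change D k s (k + 1) \<le> 0"
      using good_total_choice[OF assms(1,2)] a0 by blast
    have "SC (fill_diagonal D k s) \<le> SC D"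
      using SC_fill_change[of D k s] s(2) assms(1) a0 unfolding newton_diagram_def by linarith
    moreover have "\<forall>m\<in>supp D. fill_diagonal D k s m = D m"
      using fill_keeps unfolding supp_def by blast
    moreover have "\<forall>m\<in>supp (fill_diagonal D k s) - supp D. fst m + snd m = k"
      using supp_fill[of D k s] by force
    ultimately show ?thesis
      using newton_fill[OF assms(1)] supp_subset_fill[of D k s]
        diagonal_subset_supp_fill[where D = D and k = k, OF s(1)]
      by (intro exI[of _ "fill_diagonal D k s"]) auto
  qed
qed

end
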